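(* Given $\varepsilon>0$ and $q\in(1,\infty)$, the following holds for all sufficiently large $m\in\mathbb{N}$. Suppose $\mu,\nu$ are $2^{-m}$-measures with $\|\mu*\nu\|_q\ge2^{-\varepsilon m}\|\mu\|_q$. Then there exist integers $j,j'\le2\varepsilon q'm$ such that, setting \[ A=\{x:2^{-j-1}\|\mu\|_q^{q'}<\mu(x)\le2^{-j}\|\mu\|_q^{q'}\},\qquad B=\{y:2^{-j'-1}2^{-m}<\nu(y)\le2^{-j'}2^{-m}\}, \] we have: (i) $\|\mathbf{1}_A*\mathbf{1}_B\|_q\ge2^{-2\varepsilon m}\|\mathbf{1}_A\|_q\|\mathbf{1}_B\|_1$; (ii) $\|\mu|_A\|_q\ge2^{-2\varepsilon m}\|\mu\|_q$; (iii) $\nu(B)\ge2^{-2\varepsilon m}$.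
   Context: A $2^{-m}$-measure is a probability measure supported on $2^{-m}\mathbb{Z}\cap[0,1)$, viewed on the circle $\mathbb{R}/\mathbb{Z}$, where convolutions are taken. For finitely supported $f$ (measure or function), $\|f\|_q=(\sum_y f(y)^q)^{1/q}$; $q'=q/(q-1)$. *)

theory Defs
  imports Complex_Main "HOL-Library.Indicator_Function"
begin

text \<open>Points of the grid 2^{-m} Z \<inter> [0,1) on the circle R/Z are encoded by
  their numerators k < 2^m (the point k / 2^m).  Functions are nat \<Rightarrow> real,
  only values on {..<2^m} matter.\<close>

definition grid :: "nat \<Rightarrow> nat set" where
  "grid m = {..<(2::nat)^m}"

definition dyadic_measure :: "nat \<Rightarrow> (nat \<Rightarrow> real) \<Rightarrow> bool" where
  "dyadic_measure m \<mu> \<longleftrightarrow> (\<forall>x. 0 \<le> \<mu> x) \<and> (\<forall>x. x \<notin> grid m \<longrightarrow> \<mu> x = 0)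
     \<and> (\<Sum>x\<in>grid m. \<mu> x) = 1"

text \<open>Convolution on the circle: addition of grid points is addition mod 2^m.\<close>
definition conv :: "nat \<Rightarrow> (nat \<Rightarrow> real) \<Rightarrow> (nat \<Rightarrow> real) \<Rightarrow> nat \<Rightarrow> real" where
  "conv m f g x = (if x \<in> grid m
     then (\<Sum>y\<in>grid m. f y * g ((x + 2^m - y) mod 2^m)) else 0)"

definition lqnorm :: "nat \<Rightarrow> real \<Rightarrow> (nat \<Rightarrow> real) \<Rightarrow> real" where
  "lqnorm m q f = (\<Sum>y\<in>grid m. \<bar>f y\<bar> powr q) powr (1 / q)"

definition restr :: "(nat \<Rightarrow> real) \<Rightarrow> nat set \<Rightarrow> nat \<Rightarrow> real" where
  "restr \<mu> A = (\<lambda>x. if x \<in> A then \<mu> x else 0)"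

definition conj_exp :: "real \<Rightarrow> real" where
  "conj_exp q = q / (q - 1)"

end

theory Submission
  imports Defs "HOL-Analysis.Analysis" "HOL-Real_Asymp.Real_Asymp"
begin

text \<open>Split \<open>\<mu>\<close> by the size of its values into the level sets
  \<open>{x. 2^(-j-1) K < \<mu> x \<le> 2^(-j) K}\<close>, \<open>K = lqnorm m q \<mu> powr q'\<close>, for \<open>-m \<le> j \<le> J\<close>
  with \<open>J = \<lfloor>2 \<epsilon> q' m\<rfloor>\<close>, plus one piece holding all values \<open>\<le> 2^(-J-1) K\<close>; split \<open>\<nu>\<close> in the
  same way at scale \<open>2^(-m)\<close>.  As \<open>\<mu> * \<nu>\<close> is dominated by the sum of the \<open>O(m^2)\<close> convolutions
  of pieces, the pigeonhole principle gives one pair \<open>(A, B)\<close> with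
  \<open>lqnorm (\<mu>|A * \<nu>|B) \<ge> 4 * 2^(-2 \<epsilon> m) * lqnorm \<mu>\<close> once m is large.  Young's inequality bounds
  the left side by \<open>lqnorm (\<mu>|A) * \<nu>(B)\<close>, so both factors are large: this gives (ii) and (iii)
  and excludes the small-value pieces, whose norm resp. mass is below \<open>2^(-2 \<epsilon> m)\<close>.  On a level
  set \<open>\<mu>\<close> and \<open>\<nu>\<close> are constant up to a factor 2, which turns the same lower bound into (i).\<close>

text \<open>The library's \<open>powr_convex\<close> is stated on \<open>{0<..}\<close>; Jensen below needs zero values too.\<close>

lemma convex_on_powr_nonneg:
  assumes "1 \<le> p"
  shows "convex_on {0..} (\<lambda>x::real. x powr p)"
proof (rule convex_onI)
  fix t x y :: real
  assume t: "0 < t" "t < 1" and xy: "x \<in> {0..}" "y \<in> {0..}"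
  have shrink: "s powr p \<le> s" if "0 \<le> s" "s \<le> 1" for s :: real
    using powr_mono'[of 1 p s] that assms by simp
  show "((1 - t) *\<^sub>R x + t *\<^sub>R y) powr p \<le> (1 - t) * x powr p + t * y powr p"
  proof (cases "x = 0 \<or> y = 0")
    case False
    then have "x \<in> {0<..}" "y \<in> {0<..}" using xy by auto
    then show ?thesis using convex_onD[OF powr_convex[OF assms], of t x y] t by auto
  next
    case True
    then show ?thesis
    proof
      assume "x = 0"
      have "(t * y) powr p = t powr p * y powr p" using t xy by (simp add: powr_mult)
      also have "\<dots> \<le> t * y powr p" using shrink[of t] t by (intro mult_right_mono) auto
      finally show ?thesis using \<open>x = 0\<close> by simp
    next
      assume "y = 0"
      have "((1 - t) * x) powr p = (1 - t) powr p * x powr p" using t xy by (simp add: powr_mult)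
      also have "\<dots> \<le> (1 - t) * x powr p" using shrink[of "1 - t"] t by (intro mult_right_mono) auto
      finally show ?thesis using \<open>y = 0\<close> by simp
    qed
  qed
qed auto

lemma powr_diff_one_mult: "0 \<le> (x::real) \<Longrightarrow> x powr (p - 1) * x = x powr p"
  using powr_mult_base[of x "p - 1"] by (simp add: mult.commute)

lemma powr_minus_diff_one: "(b::real) powr (- x - 1) = 1 / b powr (x + 1)"
  using powr_minus_divide[of b "x + 1"] by simp

lemma sum_mult_powr_le:
  fixes w a :: "'a \<Rightarrow> real"
  assumes S: "finite S" and p: "1 \<le> p"
    and w: "\<And>i. i \<in> S \<Longrightarrow> 0 \<le> w i" and a: "\<And>i. i \<in> S \<Longrightarrow> 0 \<le> a i"
  shows "(\<Sum>i\<in>S. w i * a i) powr p \<le> (\<Sum>i\<in>S. w i) powr (p - 1) * (\<Sum>i\<in>S. w i * a i powr p)"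
proof -
  define W where "W = (\<Sum>i\<in>S. w i)"
  show ?thesis
  proof (cases "W = 0")
    case True
    then have "w i = 0" if "i \<in> S" for i
      using sum_nonneg_eq_0_iff[OF S] w that unfolding W_def by blast
    then show ?thesis by simp
  next
    case False
    then have W: "0 < W" "S \<noteq> {}"
      using sum_nonneg[of S w] w unfolding W_def by fastforce+
    have jensen: "(\<Sum>i\<in>S. (w i / W) * a i) powr p \<le> (\<Sum>i\<in>S. (w i / W) * a i powr p)"
      using convex_on_sum[OF S W(2) convex_on_powr_nonneg[OF p], of "\<lambda>i. w i / W" a] w a W
      by (simp add: W_def sum_divide_distrib[symmetric])
    have "(\<Sum>i\<in>S. w i * a i) powr p = W powr p * (\<Sum>i\<in>S. (w i / W) * a i) powr p"
      using W w a by (simp add: powr_mult[symmetric] sum_nonneg sum_distrib_left)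
    also have "\<dots> \<le> W powr p * (\<Sum>i\<in>S. (w i / W) * a i powr p)"
      using jensen by (simp add: mult_left_mono)
    also have "\<dots> = W powr (p - 1) * (\<Sum>i\<in>S. w i * a i powr p)"
      using W by (simp add: powr_diff sum_distrib_left field_simps)
    finally show ?thesis by (simp add: W_def)
  qed
qed

lemma sum_powr_le_card:
  fixes a :: "'a \<Rightarrow> real"
  assumes "finite S" "1 \<le> p" "\<And>i. i \<in> S \<Longrightarrow> 0 \<le> a i"
  shows "(\<Sum>i\<in>S. a i) powr p \<le> real (card S) powr (p - 1) * (\<Sum>i\<in>S. a i powr p)"
  using sum_mult_powr_le[of S p "\<lambda>_. 1" a] assms by simp

lemma finite_grid [simp]: "finite (grid m)"
  by (simp add: grid_def)

lemma card_grid: "card (grid m) = 2 ^ m"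
  by (simp add: grid_def)

lemma grid_diff_in_grid [simp]: "(x + 2 ^ m - y) mod 2 ^ m \<in> grid m"
  by (simp add: grid_def)

lemma mod_add_minus_eq:
  assumes "x < (N::nat)" "y < N"
  shows "(x + N - y) mod N = (if y \<le> x then x - y else x + N - y)"
proof (cases "y \<le> x")
  case True
  then have "(x + N - y) mod N = (x - y + N) mod N" by simp
  also have "\<dots> = x - y" using assms by simp
  finally show ?thesis using True by simp
qed (use assms in simp)

lemma mod_add_eq_if:
  "z < (N::nat) \<Longrightarrow> y < N \<Longrightarrow> (z + y) mod N = (if z + y < N then z + y else z + y - N)"
  by (simp add: le_mod_geq)

lemma sum_grid_translate:
  assumes "y \<in> grid m"
  shows "(\<Sum>x\<in>grid m. g ((x + 2 ^ m - y) mod 2 ^ m)) = (\<Sum>z\<in>grid m. g z)"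
proof (rule sum.reindex_bij_witness[where i = "\<lambda>z. (z + y) mod 2 ^ m" and j = "\<lambda>x. (x + 2 ^ m - y) mod 2 ^ m"])
  fix x assume "x \<in> grid m"
  then show "((x + 2 ^ m - y) mod 2 ^ m + y) mod 2 ^ m = x"
    using assms by (auto simp: grid_def mod_add_minus_eq mod_add_eq_if)
next
  fix z assume "z \<in> grid m"
  then show "((z + y) mod 2 ^ m + 2 ^ m - y) mod 2 ^ m = z"
    using assms by (auto simp: grid_def mod_add_minus_eq mod_add_eq_if)
qed (simp_all add: grid_def)

lemma sum_grid_reflect:
  assumes "x \<in> grid m"
  shows "(\<Sum>y\<in>grid m. g ((x + 2 ^ m - y) mod 2 ^ m)) = (\<Sum>z\<in>grid m. g z)"
proof (rule sum.reindex_bij_witness[where i = "\<lambda>z. (x + 2 ^ m - z) mod 2 ^ m" and j = "\<lambda>y. (x + 2 ^ m - y) mod 2 ^ m"])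
  fix y assume "y \<in> grid m"
  then show "(x + 2 ^ m - (x + 2 ^ m - y) mod 2 ^ m) mod 2 ^ m = y"
    using assms by (auto simp: grid_def mod_add_minus_eq)
next
  fix z assume "z \<in> grid m"
  then show "(x + 2 ^ m - (x + 2 ^ m - z) mod 2 ^ m) mod 2 ^ m = z"
    using assms by (auto simp: grid_def mod_add_minus_eq)
qed simp_all

lemma lqnorm_nonneg: "0 \<le> lqnorm m q f"
  by (simp add: lqnorm_def)

lemma lqnorm_powr: "0 < q \<Longrightarrow> lqnorm m q f powr q = (\<Sum>y\<in>grid m. \<bar>f y\<bar> powr q)"
  by (simp add: lqnorm_def powr_powr sum_nonneg)

lemma lqnorm_le_of_sum_powr_le:
  assumes "0 < q" "0 \<le> C" "(\<Sum>y\<in>grid m. \<bar>f y\<bar> powr q) \<le> C powr q"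
  shows "lqnorm m q f \<le> C"
proof -
  have "lqnorm m q f \<le> (C powr q) powr (1 / q)"
    unfolding lqnorm_def using assms by (intro powr_mono2) (auto intro: sum_nonneg)
  also have "\<dots> = C"
    using assms by (simp add: powr_powr)
  finally show ?thesis .
qed

lemma lqnorm_mono:
  assumes "0 < q" "\<And>x. x \<in> grid m \<Longrightarrow> \<bar>f x\<bar> \<le> \<bar>g x\<bar>"
  shows "lqnorm m q f \<le> lqnorm m q g"
  unfolding lqnorm_def using assms by (intro powr_mono2 sum_mono) (auto intro: sum_nonneg)

lemma lqnorm_cmult:
  assumes "0 < q" "0 \<le> c"
  shows "lqnorm m q (\<lambda>x. c * f x) = c * lqnorm m q f"
proof -
  have "(\<Sum>y\<in>grid m. \<bar>c * f y\<bar> powr q) = c powr q * (\<Sum>y\<in>grid m. \<bar>f y\<bar> powr q)"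
    using assms by (simp add: abs_mult powr_mult sum_distrib_left)
  then show ?thesis
    unfolding lqnorm_def using assms by (simp add: powr_mult powr_powr sum_nonneg)
qed

lemma lqnorm_restr_le: "0 < q \<Longrightarrow> lqnorm m q (restr f S) \<le> lqnorm m q f"
  by (rule lqnorm_mono) (auto simp: restr_def)

lemma sum_restr_grid: "S \<subseteq> grid m \<Longrightarrow> (\<Sum>x\<in>grid m. restr f S x) = (\<Sum>x\<in>S. f x)"
  unfolding restr_def by (simp add: sum.inter_restrict[symmetric] Int_absorb1)

lemma lqnorm_1_indicator:
  assumes "B \<subseteq> grid m"
  shows "lqnorm m 1 (indicator B) = real (card B)"
proof -
  have "lqnorm m 1 (indicator B) = (\<Sum>y\<in>grid m. indicator B y)"
    unfolding lqnorm_def by (simp add: sum_nonneg)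
  then show ?thesis
    using assms unfolding indicator_def by (simp add: sum.inter_restrict Int_absorb1)
qed

lemma restr_nonneg: "(\<And>x. 0 \<le> f x) \<Longrightarrow> 0 \<le> restr f S x"
  by (simp add: restr_def)

lemma conv_nonneg: "(\<And>x. 0 \<le> f x) \<Longrightarrow> (\<And>x. 0 \<le> g x) \<Longrightarrow> 0 \<le> conv m f g x"
  unfolding conv_def by (auto intro!: sum_nonneg)

lemma conv_mono:
  assumes "\<And>x. 0 \<le> f x" "\<And>x. f x \<le> F x" "\<And>x. 0 \<le> g x" "\<And>x. g x \<le> G x"
  shows "conv m f g x \<le> conv m F G x"
  unfolding conv_def using assms by (auto intro!: sum_mono mult_mono order_trans[OF assms(1,2)])

lemma conv_cmult: "conv m (\<lambda>x. a * f x) (\<lambda>x. b * g x) x = a * b * conv m f g x"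
  unfolding conv_def by (simp add: sum_distrib_left mult_ac)

lemma conv_sum_sum:
  assumes "finite I" "finite K"
  shows "conv m (\<lambda>y. \<Sum>i\<in>I. F i y) (\<lambda>y. \<Sum>k\<in>K. G k y) x
       = (\<Sum>(i, k)\<in>I \<times> K. conv m (F i) (G k) x)"
proof (cases "x \<in> grid m")
  case True
  define t where "t y = (x + 2 ^ m - y) mod (2::nat) ^ m" for y
  have "conv m (\<lambda>y. \<Sum>i\<in>I. F i y) (\<lambda>y. \<Sum>k\<in>K. G k y) x
      = (\<Sum>y\<in>grid m. \<Sum>i\<in>I. \<Sum>k\<in>K. F i y * G k (t y))"
    using True by (simp add: conv_def t_def sum_product)
  also have "\<dots> = (\<Sum>i\<in>I. \<Sum>k\<in>K. \<Sum>y\<in>grid m. F i y * G k (t y))"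
    by (subst sum.swap) (simp add: sum.swap[of _ "grid m"])
  also have "\<dots> = (\<Sum>i\<in>I. \<Sum>k\<in>K. conv m (F i) (G k) x)"
    using True by (simp add: conv_def t_def)
  also have "\<dots> = (\<Sum>(i, k)\<in>I \<times> K. conv m (F i) (G k) x)"
    by (rule sum.cartesian_product)
  finally show ?thesis .
qed (simp add: conv_def)

lemma lqnorm_conv_le:
  assumes q: "1 \<le> q" and f: "\<And>x. 0 \<le> f x" and g: "\<And>x. 0 \<le> g x"
  shows "lqnorm m q (conv m f g) \<le> lqnorm m q f * (\<Sum>z\<in>grid m. g z)"
proof -
  define G where "G = (\<Sum>z\<in>grid m. g z)"
  define t where "t x y = (x + 2 ^ m - y) mod (2::nat) ^ m" for x y
  have G: "0 \<le> G" unfolding G_def using g by (simp add: sum_nonneg)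
  have pointwise: "\<bar>conv m f g x\<bar> powr q \<le> G powr (q - 1) * (\<Sum>y\<in>grid m. g (t x y) * f y powr q)"
    if x: "x \<in> grid m" for x
  proof -
    have weights: "(\<Sum>y\<in>grid m. g (t x y)) = G"
      unfolding t_def G_def using x by (rule sum_grid_reflect)
    have "conv m f g x = (\<Sum>y\<in>grid m. g (t x y) * f y)"
      using x by (simp add: conv_def t_def mult.commute)
    moreover have "0 \<le> conv m f g x"
      using f g by (rule conv_nonneg)
    ultimately have "\<bar>conv m f g x\<bar> powr q = (\<Sum>y\<in>grid m. g (t x y) * f y) powr q"
      by simp
    also have "\<dots> \<le> (\<Sum>y\<in>grid m. g (t x y)) powr (q - 1) * (\<Sum>y\<in>grid m. g (t x y) * f y powr q)"
      using q f g by (intro sum_mult_powr_le) auto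
    finally show ?thesis
      unfolding weights .
  qed
  have "(\<Sum>x\<in>grid m. \<bar>conv m f g x\<bar> powr q)
      \<le> (\<Sum>x\<in>grid m. G powr (q - 1) * (\<Sum>y\<in>grid m. g (t x y) * f y powr q))"
    using pointwise by (rule sum_mono)
  also have "\<dots> = G powr (q - 1) * (\<Sum>y\<in>grid m. \<Sum>x\<in>grid m. g (t x y) * f y powr q)"
    by (subst sum.swap) (simp add: sum_distrib_left)
  also have "\<dots> = G powr (q - 1) * (\<Sum>y\<in>grid m. G * \<bar>f y\<bar> powr q)"
    using f by (simp add: t_def G_def sum_grid_translate sum_distrib_right[symmetric])
  also have "\<dots> = G powr (q - 1) * G * (\<Sum>y\<in>grid m. \<bar>f y\<bar> powr q)"
    by (simp add: sum_distrib_left mult.assoc)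
  also have "\<dots> = (G * lqnorm m q f) powr q"
    using q G by (simp add: powr_mult lqnorm_powr powr_diff_one_mult)
  finally have "lqnorm m q (conv m f g) \<le> G * lqnorm m q f"
    using q G by (intro lqnorm_le_of_sum_powr_le) (auto simp: lqnorm_nonneg)
  then show ?thesis
    by (simp add: G_def mult.commute)
qed

lemma lqnorm_pigeonhole:
  assumes q: "1 \<le> q" and I: "finite I" "I \<noteq> {}"
    and h: "\<And>k x. k \<in> I \<Longrightarrow> 0 \<le> h k x" and F: "\<And>x. 0 \<le> F x"
    and cover: "\<And>x. x \<in> grid m \<Longrightarrow> F x \<le> (\<Sum>k\<in>I. h k x)"
  shows "\<exists>k\<in>I. lqnorm m q F \<le> card I * lqnorm m q (h k)"
proof -
  define P where "P = real (card I)"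
  have P: "1 \<le> P" using I by (simp add: P_def Suc_le_eq card_gt_0_iff)
  define N where "N k = lqnorm m q (h k)" for k
  have "Max (N ` I) \<in> N ` I"
    using I by (intro Max_in) auto
  then obtain k where k: "k \<in> I" "N k = Max (N ` I)"
    by (metis imageE)
  have max: "N k' \<le> N k" if "k' \<in> I" for k'
    using Max_ge[of "N ` I"] k(2) I that by simp
  have pointwise: "\<bar>F x\<bar> powr q \<le> P powr (q - 1) * (\<Sum>k\<in>I. \<bar>h k x\<bar> powr q)"
    if x: "x \<in> grid m" for x
  proof -
    have "\<bar>F x\<bar> powr q \<le> (\<Sum>k\<in>I. h k x) powr q"
      using F cover[OF x] q by (intro powr_mono2) auto
    also have "\<dots> \<le> P powr (q - 1) * (\<Sum>k\<in>I. h k x powr q)"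
      unfolding P_def using h by (intro sum_powr_le_card[OF I(1) q]) auto
    finally show ?thesis using h by simp
  qed
  have "(\<Sum>x\<in>grid m. \<bar>F x\<bar> powr q) \<le> (\<Sum>x\<in>grid m. P powr (q - 1) * (\<Sum>k\<in>I. \<bar>h k x\<bar> powr q))"
    using pointwise by (rule sum_mono)
  also have "\<dots> = P powr (q - 1) * (\<Sum>k\<in>I. N k powr q)"
    using q by (simp add: N_def lqnorm_powr sum_distrib_left sum.swap[of _ I])
  also have "\<dots> \<le> P powr (q - 1) * (\<Sum>k'\<in>I. N k powr q)"
    using max q by (intro mult_left_mono sum_mono powr_mono2) (auto simp: N_def lqnorm_nonneg)
  also have "\<dots> = P powr (q - 1) * P * N k powr q"
    by (simp add: P_def)
  also have "\<dots> = (P * N k) powr q"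
    using P by (simp add: N_def powr_diff_one_mult powr_mult lqnorm_nonneg)
  finally have "lqnorm m q F \<le> P * N k"
    using q P by (intro lqnorm_le_of_sum_powr_le) (auto simp: N_def lqnorm_nonneg)
  then show ?thesis
    using k(1) by (auto simp: P_def N_def)
qed

lemma lqnorm_conv_pigeonhole:
  assumes q: "1 \<le> q" and I: "finite I" "I \<noteq> {}" and K: "finite K" "K \<noteq> {}"
    and f: "\<And>x. 0 \<le> f x" "\<And>x. f x \<le> (\<Sum>i\<in>I. F i x)"
    and g: "\<And>x. 0 \<le> g x" "\<And>x. g x \<le> (\<Sum>k\<in>K. G k x)"
    and F: "\<And>i x. 0 \<le> F i x" and G: "\<And>k x. 0 \<le> G k x"
  shows "\<exists>i\<in>I. \<exists>k\<in>K.
           lqnorm m q (conv m f g) \<le> card I * card K * lqnorm m q (conv m (F i) (G k))"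
proof -
  have "conv m f g x \<le> (\<Sum>(i, k)\<in>I \<times> K. conv m (F i) (G k) x)" for x
  proof -
    have "conv m f g x \<le> conv m (\<lambda>y. \<Sum>i\<in>I. F i y) (\<lambda>y. \<Sum>k\<in>K. G k y) x"
      using f g by (intro conv_mono) auto
    then show ?thesis using conv_sum_sum[OF I(1) K(1)] by simp
  qed
  moreover have "0 \<le> conv m f g x" "0 \<le> conv m (F i) (G k) x" for i k x
    using f(1) g(1) F G by (simp_all add: conv_nonneg)
  ultimately have "\<exists>(i, k)\<in>I \<times> K.
      lqnorm m q (conv m f g) \<le> card (I \<times> K) * lqnorm m q (conv m (F i) (G k))"
    using lqnorm_pigeonhole[of q "I \<times> K" "\<lambda>(i, k). conv m (F i) (G k)" "conv m f g" m] q I K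
    by (simp add: case_prod_beta)
  then obtain i k where "i \<in> I" "k \<in> K"
    "lqnorm m q (conv m f g) \<le> card (I \<times> K) * lqnorm m q (conv m (F i) (G k))"
    by blast
  then show ?thesis
    by (metis card_cartesian_product of_nat_mult)
qed

lemma dyadic_measure_nonneg: "dyadic_measure m \<mu> \<Longrightarrow> 0 \<le> \<mu> x"
  by (simp add: dyadic_measure_def)

lemma dyadic_measure_sum_le_1:
  assumes "dyadic_measure m \<mu>" "S \<subseteq> grid m"
  shows "(\<Sum>x\<in>S. \<mu> x) \<le> 1"
proof -
  have "(\<Sum>x\<in>S. \<mu> x) \<le> (\<Sum>x\<in>grid m. \<mu> x)"
    using assms by (intro sum_mono2) (auto simp: dyadic_measure_def)
  then show ?thesis
    using assms(1) by (simp add: dyadic_measure_def)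
qed

lemma dyadic_measure_le_1:
  assumes "dyadic_measure m \<mu>"
  shows "\<mu> x \<le> 1"
proof (cases "x \<in> grid m")
  case True
  then show ?thesis using dyadic_measure_sum_le_1[OF assms, of "{x}"] by simp
qed (use assms in \<open>simp add: dyadic_measure_def\<close>)

lemma dyadic_measure_lqnorm_pos:
  assumes \<mu>: "dyadic_measure m \<mu>" and q: "0 < q"
  shows "0 < lqnorm m q \<mu>"
proof -
  have "\<exists>x\<in>grid m. 0 < \<mu> x"
  proof (rule ccontr)
    assume "\<not> (\<exists>x\<in>grid m. 0 < \<mu> x)"
    then have "(\<Sum>x\<in>grid m. \<mu> x) \<le> 0"
      by (intro sum_nonpos) (auto simp: not_less)
    then show False
      using \<mu> by (simp add: dyadic_measure_def)
  qed
  then obtain x where "x \<in> grid m" "0 < \<mu> x"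
    by blast
  then have "0 < (\<Sum>y\<in>grid m. \<bar>\<mu> y\<bar> powr q)"
    by (intro sum_pos2[of _ x]) auto
  then show ?thesis
    by (simp add: lqnorm_def)
qed

lemma dyadic_measure_lqnorm_powr_ge:
  assumes \<mu>: "dyadic_measure m \<mu>" and q: "1 < q"
  shows "2 powr (- real m) \<le> lqnorm m q \<mu> powr conj_exp q"
proof -
  define S where "S = (\<Sum>y\<in>grid m. \<mu> y powr q)"
  define A :: real where "A = 2 powr (real m * (q - 1))"
  have A: "0 < A" by (simp add: A_def)
  have "1 = (\<Sum>y\<in>grid m. \<mu> y) powr q"
    using \<mu> by (simp add: dyadic_measure_def)
  also have "\<dots> \<le> A * S"
    using sum_powr_le_card[of "grid m" q \<mu>] q \<mu>
    by (simp add: S_def A_def card_grid dyadic_measure_nonneg powr_realpow[symmetric] powr_powr)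
  finally have "1 / A \<le> S"
    using A by (simp add: pos_divide_le_eq mult.commute)
  moreover have "(2 powr (- real m)) powr (q - 1) = 2 powr (- (real m * (q - 1)))"
    by (simp add: powr_powr)
  ultimately have "(2 powr (- real m)) powr (q - 1) \<le> S"
    by (simp add: A_def powr_minus_divide)
  then have "((2 powr (- real m)) powr (q - 1)) powr (1 / (q - 1)) \<le> S powr (1 / (q - 1))"
    using q by (intro powr_mono2) auto
  moreover have "lqnorm m q \<mu> powr conj_exp q = S powr (1 / (q - 1))"
    using q \<mu> by (simp add: lqnorm_def S_def conj_exp_def dyadic_measure_nonneg powr_powr)
  ultimately show ?thesis
    using q by (simp add: powr_powr)
qed

lemma lqnorm_restr_sublevel_le:
  assumes \<mu>: "dyadic_measure m \<mu>" and q: "1 \<le> q" and \<theta>: "0 \<le> \<theta>"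
  shows "lqnorm m q (restr \<mu> {x \<in> grid m. \<mu> x \<le> \<theta>}) \<le> \<theta> powr ((q - 1) / q)"
proof (rule lqnorm_le_of_sum_powr_le)
  let ?S = "{x \<in> grid m. \<mu> x \<le> \<theta>}"
  have "\<bar>restr \<mu> ?S x\<bar> powr q \<le> \<theta> powr (q - 1) * \<mu> x" for x
  proof (cases "x \<in> ?S")
    case True
    have "\<mu> x powr q = \<mu> x powr (q - 1) * \<mu> x"
      using \<mu> by (simp add: powr_diff_one_mult dyadic_measure_nonneg)
    also have "\<dots> \<le> \<theta> powr (q - 1) * \<mu> x"
      using True q \<mu> by (intro mult_right_mono powr_mono2) (auto simp: dyadic_measure_nonneg)
    finally show ?thesis
      using True \<mu> by (simp add: restr_def dyadic_measure_nonneg)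
  next
    case False
    then show ?thesis
      using \<theta> \<mu> by (auto simp: restr_def dyadic_measure_nonneg)
  qed
  then have "(\<Sum>x\<in>grid m. \<bar>restr \<mu> ?S x\<bar> powr q) \<le> (\<Sum>x\<in>grid m. \<theta> powr (q - 1) * \<mu> x)"
    by (intro sum_mono)
  also have "\<dots> = (\<theta> powr ((q - 1) / q)) powr q"
    using \<mu> q by (simp add: sum_distrib_left[symmetric] dyadic_measure_def powr_powr)
  finally show "(\<Sum>x\<in>grid m. \<bar>restr \<mu> ?S x\<bar> powr q) \<le> (\<theta> powr ((q - 1) / q)) powr q" .
qed (use q in auto)

lemma sum_sublevel_le:
  fixes f :: "nat \<Rightarrow> real"
  assumes "0 \<le> \<theta>"
  shows "(\<Sum>x\<in>{x \<in> grid m. f x \<le> \<theta>}. f x) \<le> 2 ^ m * \<theta>"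
proof -
  have "(\<Sum>x\<in>{x \<in> grid m. f x \<le> \<theta>}. f x) \<le> real (card {x \<in> grid m. f x \<le> \<theta>}) * \<theta>"
    by (rule sum_bounded_above) auto
  also have "\<dots> \<le> real (card (grid m)) * \<theta>"
    using assms by (intro mult_right_mono of_nat_mono card_mono) auto
  finally show ?thesis
    by (simp add: card_grid)
qed

definition level_set :: "nat \<Rightarrow> (nat \<Rightarrow> real) \<Rightarrow> real \<Rightarrow> int \<Rightarrow> nat set" where
  "level_set m f K j =
     {x \<in> grid m. 2 powr (- real_of_int j - 1) * K < f x \<and> f x \<le> 2 powr (- real_of_int j) * K}"

definition dyadic_piece :: "nat \<Rightarrow> (nat \<Rightarrow> real) \<Rightarrow> real \<Rightarrow> int \<Rightarrow> int \<Rightarrow> nat set" where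
  "dyadic_piece m f K J j =
     (if j \<le> J then level_set m f K j else {x \<in> grid m. f x \<le> 2 powr (- real_of_int J - 1) * K})"

lemma dyadic_piece_subset_grid: "dyadic_piece m f K J j \<subseteq> grid m"
  by (auto simp: dyadic_piece_def level_set_def)

lemma ex_level_index:
  fixes K v :: real and J :: int
  assumes v: "0 < v" "v \<le> 1" and K: "2 powr (- real m) \<le> K"
    and above: "2 powr (- real_of_int J - 1) * K < v"
  shows "\<exists>j. - int m \<le> j \<and> j \<le> J \<and> 2 powr (- real_of_int j - 1) * K < v \<and> v \<le> 2 powr (- real_of_int j) * K"
proof -
  have "0 < K"
    using K by (rule less_le_trans[rotated]) simp
  define j where "j = \<lfloor>log 2 (K / v)\<rfloor>"
  have j: "2 powr j \<le> K / v" "K / v < 2 powr (j + 1)"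
    using floor_log_eq_powr_iff[of "K / v" 2 j] \<open>0 < K\<close> v by (simp_all add: j_def)
  have "K \<le> K / v"
    using v \<open>0 < K\<close> by (simp add: le_divide_eq mult_left_le)
  then have "2 powr (- real m) < 2 powr (j + 1)"
    using K j(2) by linarith
  then have "- int m \<le> j"
    by simp
  have "K < v * 2 powr (J + 1)"
    using above by (simp add: powr_minus_diff_one pos_divide_less_eq)
  then have "K / v < 2 powr (J + 1)"
    using v(1) by (metis mult.commute pos_divide_less_eq)
  then have "2 powr j < 2 powr (J + 1)"
    using j(1) by linarith
  then have "j \<le> J"
    by simp
  moreover have "2 powr (- real_of_int j - 1) * K < v"
    using j(2) v by (simp add: powr_minus_diff_one pos_divide_less_eq mult.commute)
  moreover have "v \<le> 2 powr (- real_of_int j) * K"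
    using j(1) v by (simp add: powr_minus_divide le_divide_eq mult.commute)
  ultimately show ?thesis
    using \<open>- int m \<le> j\<close> by (intro exI[of _ j] conjI) auto
qed
lemma dyadic_measure_le_sum_pieces:
  assumes \<mu>: "dyadic_measure m \<mu>" and K: "2 powr (- real m) \<le> K" and J: "0 \<le> J"
  shows "\<mu> x \<le> (\<Sum>j\<in>{- int m..J + 1}. restr \<mu> (dyadic_piece m \<mu> K J j) x)"
proof (cases "x \<in> grid m \<and> 0 < \<mu> x")
  case False
  then have "\<mu> x = 0"
    using \<mu> dyadic_measure_nonneg[OF \<mu>, of x] by (auto simp: dyadic_measure_def)
  then show ?thesis
    using \<mu> by (simp add: sum_nonneg restr_def dyadic_measure_nonneg)
next
  case x: True
  obtain j where j: "j \<in> {- int m..J + 1}" "x \<in> dyadic_piece m \<mu> K J j"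
  proof (cases "\<mu> x \<le> 2 powr (- real_of_int J - 1) * K")
    case True
    then show ?thesis
      using that[of "J + 1"] x J by (simp add: dyadic_piece_def)
  next
    case False
    then obtain j where "- int m \<le> j" "j \<le> J" "2 powr (- real_of_int j - 1) * K < \<mu> x" "\<mu> x \<le> 2 powr (- real_of_int j) * K"
      using ex_level_index[of "\<mu> x" m K J] dyadic_measure_le_1[OF \<mu>, of x] K x False
      by (auto simp: not_le)
    then show ?thesis
      using that[of j] x by (simp add: dyadic_piece_def level_set_def)
  qed
  then have "\<mu> x = restr \<mu> (dyadic_piece m \<mu> K J j) x"
    by (simp add: restr_def)
  also have "\<dots> \<le> (\<Sum>j\<in>{- int m..J + 1}. restr \<mu> (dyadic_piece m \<mu> K J j) x)"
    using j \<mu> by (intro member_le_sum) (auto simp: restr_def dyadic_measure_nonneg)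
  finally show ?thesis .
qed

lemma lqnorm_restr_small_piece_le:
  assumes \<mu>: "dyadic_measure m \<mu>" and q: "1 < q"
  shows "lqnorm m q (restr \<mu> (dyadic_piece m \<mu> (lqnorm m q \<mu> powr conj_exp q) J (J + 1)))
           \<le> 2 powr ((- real_of_int J - 1) * (q - 1) / q) * lqnorm m q \<mu>"
proof -
  define c where "c = lqnorm m q \<mu>"
  have "c \<ge> 0" by (simp add: c_def lqnorm_nonneg)
  have "lqnorm m q (restr \<mu> (dyadic_piece m \<mu> (c powr conj_exp q) J (J + 1)))
          \<le> (2 powr (- real_of_int J - 1) * c powr conj_exp q) powr ((q - 1) / q)"
    unfolding dyadic_piece_def using q by (simp add: lqnorm_restr_sublevel_le[OF \<mu>])
  also have "\<dots> = 2 powr ((- real_of_int J - 1) * (q - 1) / q) * c"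
    using q \<open>c \<ge> 0\<close> by (simp add: powr_mult powr_powr conj_exp_def)
  finally show ?thesis
    by (simp add: c_def)
qed

lemma sum_small_piece_le:
  assumes "dyadic_measure m \<nu>"
  shows "(\<Sum>y\<in>dyadic_piece m \<nu> (2 powr - real m) J (J + 1). \<nu> y) \<le> 2 powr (- real_of_int J - 1)"
proof -
  have "(\<Sum>y\<in>dyadic_piece m \<nu> (2 powr - real m) J (J + 1). \<nu> y)
          \<le> 2 ^ m * (2 powr (- real_of_int J - 1) * 2 powr - real m)"
    unfolding dyadic_piece_def by (simp add: sum_sublevel_le)
  also have "\<dots> = 2 powr (- real_of_int J - 1)"
    by (simp add: powr_minus_divide powr_realpow[symmetric])
  finally show ?thesis .
qed

lemma restr_level_set_le:
  "0 \<le> K \<Longrightarrow> restr f (level_set m f K j) x \<le> 2 powr (- real_of_int j) * K * indicator (level_set m f K j) x"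
  by (auto simp: restr_def level_set_def)

lemma restr_level_set_ge:
  "2 powr (- real_of_int j) * K / 2 * indicator (level_set m f K j) x \<le> restr f (level_set m f K j) x"
  by (auto simp: restr_def level_set_def powr_diff)

lemma lqnorm_conv_restr_level_sets_le:
  fixes m :: nat and j j' :: int
  assumes q: "0 < q" and f: "\<And>x. 0 \<le> f x" and g: "\<And>x. 0 \<le> g x" and K: "0 \<le> K" "0 \<le> K'"
  defines "A \<equiv> level_set m f K j" and "B \<equiv> level_set m g K' j'"
  shows "lqnorm m q (conv m (restr f A) (restr g B))
           \<le> 2 powr (- real_of_int j) * K * (2 powr (- real_of_int j') * K')
               * lqnorm m q (conv m (indicator A) (indicator B))"
proof -
  define a b where "a = 2 powr (- real_of_int j) * K" and "b = 2 powr (- real_of_int j') * K'"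
  have ab: "0 \<le> a" "0 \<le> b"
    using K by (simp_all add: a_def b_def)
  have "conv m (restr f A) (restr g B) x \<le> conv m (\<lambda>x. a * indicator A x) (\<lambda>x. b * indicator B x) x" for x
    using f g K unfolding A_def B_def a_def b_def
    by (intro conv_mono restr_level_set_le) (auto intro: restr_nonneg)
  then have pointwise: "conv m (restr f A) (restr g B) x \<le> a * b * conv m (indicator A) (indicator B) x" for x
    by (simp add: conv_cmult)
  have "\<bar>conv m (restr f A) (restr g B) x\<bar> \<le> \<bar>a * b * conv m (indicator A) (indicator B) x\<bar>" for x
  proof -
    have "0 \<le> conv m (restr f A) (restr g B) x"
      using f g by (simp add: conv_nonneg restr_nonneg)
    then show ?thesis
      using pointwise[of x] by linarith
  qed
  then have "lqnorm m q (conv m (restr f A) (restr g B))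
      \<le> lqnorm m q (\<lambda>x. a * b * conv m (indicator A) (indicator B) x)"
    using q by (intro lqnorm_mono) auto
  also have "\<dots> = a * b * lqnorm m q (conv m (indicator A) (indicator B))"
    using q ab by (simp add: lqnorm_cmult)
  finally show ?thesis
    by (simp add: a_def b_def)
qed

lemma lqnorm_indicator_level_set_le:
  assumes q: "0 < q" and K: "0 \<le> K"
  shows "2 powr (- real_of_int j) * K / 2 * lqnorm m q (indicator (level_set m f K j))
           \<le> lqnorm m q (restr f (level_set m f K j))"
proof -
  define a where "a = 2 powr (- real_of_int j) * K / 2"
  have "0 \<le> a"
    using K by (simp add: a_def)
  have "a * lqnorm m q (indicator (level_set m f K j)) = lqnorm m q (\<lambda>x. a * indicator (level_set m f K j) x)"
    using q \<open>0 \<le> a\<close> by (intro lqnorm_cmult[symmetric])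
  also have "\<dots> \<le> lqnorm m q (restr f (level_set m f K j))"
  proof (rule lqnorm_mono)
    fix x
    have "0 \<le> a * indicator (level_set m f K j) x"
      using \<open>0 \<le> a\<close> by simp
    moreover have "a * indicator (level_set m f K j) x \<le> restr f (level_set m f K j) x"
      unfolding a_def by (rule restr_level_set_ge)
    ultimately show "\<bar>a * indicator (level_set m f K j) x\<bar> \<le> \<bar>restr f (level_set m f K j) x\<bar>"
      by linarith
  qed (rule q)
  finally show ?thesis
    by (simp add: a_def)
qed

lemma card_level_set_le:
  "2 powr (- real_of_int j) * K / 2 * card (level_set m f K j) \<le> (\<Sum>x\<in>level_set m f K j. f x)"
proof -
  have "2 powr (- real_of_int j) * K / 2 * card (level_set m f K j)
      = (\<Sum>x\<in>level_set m f K j. 2 powr (- real_of_int j) * K / 2)"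
    by simp
  also have "\<dots> \<le> (\<Sum>x\<in>level_set m f K j. f x)"
    by (intro sum_mono) (auto simp: level_set_def powr_diff)
  finally show ?thesis .
qed

lemma exists_piece_pair:
  assumes \<mu>: "dyadic_measure m \<mu>" and \<nu>: "dyadic_measure m \<nu>" and q: "1 \<le> q" and J: "0 \<le> J"
    and K: "2 powr (- real m) \<le> K" and K': "2 powr (- real m) \<le> K'"
  shows "\<exists>j\<in>{- int m..J + 1}. \<exists>j'\<in>{- int m..J + 1}.
           lqnorm m q (conv m \<mu> \<nu>) \<le> (real_of_int J + m + 2)\<^sup>2 *
             lqnorm m q (conv m (restr \<mu> (dyadic_piece m \<mu> K J j)) (restr \<nu> (dyadic_piece m \<nu> K' J j')))"
proof -
  define I where "I = {- int m..J + 1}"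
  have I: "finite I" "I \<noteq> {}" "real (card I) = real_of_int J + m + 2"
    using J by (auto simp: I_def)
  have "\<exists>j\<in>I. \<exists>j'\<in>I. lqnorm m q (conv m \<mu> \<nu>) \<le> card I * card I *
          lqnorm m q (conv m (restr \<mu> (dyadic_piece m \<mu> K J j)) (restr \<nu> (dyadic_piece m \<nu> K' J j')))"
    using dyadic_measure_le_sum_pieces[OF \<mu> K J] dyadic_measure_le_sum_pieces[OF \<nu> K' J] \<mu> \<nu> q I
    by (intro lqnorm_conv_pigeonhole) (auto simp: I_def restr_def dyadic_measure_nonneg)
  then show ?thesis
    by (simp add: I(3) power2_eq_square I_def[symmetric] mult.assoc)
qed

lemma lqnorm_conv_restr_ge_imp_factors_ge:
  assumes \<mu>: "dyadic_measure m \<mu>" and \<nu>: "dyadic_measure m \<nu>" and q: "1 \<le> q" and B: "B \<subseteq> grid m"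
    and large: "\<delta> * lqnorm m q \<mu> \<le> lqnorm m q (conv m (restr \<mu> A) (restr \<nu> B))"
  shows "\<delta> * lqnorm m q \<mu> \<le> lqnorm m q (restr \<mu> A)" and "\<delta> \<le> (\<Sum>y\<in>B. \<nu> y)"
proof -
  have young: "lqnorm m q (conv m (restr \<mu> A) (restr \<nu> B)) \<le> lqnorm m q (restr \<mu> A) * (\<Sum>y\<in>B. \<nu> y)"
    using lqnorm_conv_le[of q "restr \<mu> A" "restr \<nu> B" m] q \<mu> \<nu> B
    by (simp add: sum_restr_grid restr_nonneg dyadic_measure_nonneg)
  have mass: "0 \<le> (\<Sum>y\<in>B. \<nu> y)" "(\<Sum>y\<in>B. \<nu> y) \<le> 1"
    using \<nu> B by (simp_all add: sum_nonneg dyadic_measure_nonneg dyadic_measure_sum_le_1)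
  have norm: "0 \<le> lqnorm m q (restr \<mu> A)" "lqnorm m q (restr \<mu> A) \<le> lqnorm m q \<mu>"
    using q by (simp_all add: lqnorm_nonneg lqnorm_restr_le)
  show "\<delta> * lqnorm m q \<mu> \<le> lqnorm m q (restr \<mu> A)"
    using large young mult_left_le[OF mass(2) norm(1)] by linarith
  have "\<delta> * lqnorm m q \<mu> \<le> lqnorm m q \<mu> * (\<Sum>y\<in>B. \<nu> y)"
    using large young mult_right_mono[OF norm(2) mass(1)] by linarith
  then show "\<delta> \<le> (\<Sum>y\<in>B. \<nu> y)"
    using dyadic_measure_lqnorm_pos[OF \<mu>] q by (simp add: mult.commute)
qed

lemma dyadic_piece_index_le:
  assumes \<mu>: "dyadic_measure m \<mu>" and \<nu>: "dyadic_measure m \<nu>" and q: "1 < q" and J: "0 \<le> J"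
    and small: "2 powr ((- real_of_int J - 1) * (q - 1) / q) < \<delta>"
    and j: "j \<le> J + 1" "j' \<le> J + 1"
    and large: "\<delta> * lqnorm m q \<mu> \<le> lqnorm m q (conv m
      (restr \<mu> (dyadic_piece m \<mu> (lqnorm m q \<mu> powr conj_exp q) J j))
      (restr \<nu> (dyadic_piece m \<nu> (2 powr - real m) J j')))"
  shows "j \<le> J" and "j' \<le> J"
proof -
  define c where "c = lqnorm m q \<mu>"
  have c: "0 < c"
    using dyadic_measure_lqnorm_pos[OF \<mu>] q by (simp add: c_def)
  note bounds = lqnorm_conv_restr_ge_imp_factors_ge[OF \<mu> \<nu> _ dyadic_piece_subset_grid large, folded c_def]
  have "j \<noteq> J + 1"
  proof
    assume "j = J + 1"
    then have "lqnorm m q (restr \<mu> (dyadic_piece m \<mu> (c powr conj_exp q) J j))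
        \<le> 2 powr ((- real_of_int J - 1) * (q - 1) / q) * c"
      using lqnorm_restr_small_piece_le[OF \<mu> q, of J] by (simp add: c_def)
    also have "\<dots> < \<delta> * c"
      using small c by simp
    finally show False
      using bounds(1) q by simp
  qed
  with j show "j \<le> J"
    by simp
  have "j' \<noteq> J + 1"
  proof
    assume "j' = J + 1"
    then have "(\<Sum>y\<in>dyadic_piece m \<nu> (2 powr - real m) J j'. \<nu> y) \<le> 2 powr (- real_of_int J - 1)"
      using sum_small_piece_le[OF \<nu>, of J] by simp
    also have "\<dots> \<le> 2 powr ((- real_of_int J - 1) * (q - 1) / q)"
      using J q by (simp add: field_simps)
    finally show False
      using bounds(2) small q by simp
  qed
  with j show "j' \<le> J"
    by simp
qed

lemma exists_large_level_pair:
  assumes \<mu>: "dyadic_measure m \<mu>" and \<nu>: "dyadic_measure m \<nu>" and q: "1 < q" and J: "0 \<le> J"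
    and large: "(real_of_int J + m + 2)\<^sup>2 * (\<delta> * lqnorm m q \<mu>) \<le> lqnorm m q (conv m \<mu> \<nu>)"
    and small: "2 powr ((- real_of_int J - 1) * (q - 1) / q) < \<delta>"
  shows "\<exists>j j'. j \<le> J \<and> j' \<le> J \<and> \<delta> * lqnorm m q \<mu> \<le>
           lqnorm m q (conv m (restr \<mu> (level_set m \<mu> (lqnorm m q \<mu> powr conj_exp q) j))
                              (restr \<nu> (level_set m \<nu> (2 powr - real m) j')))"
proof -
  define K where "K = lqnorm m q \<mu> powr conj_exp q"
  have K: "2 powr (- real m) \<le> K"
    using dyadic_measure_lqnorm_powr_ge[OF \<mu> q] by (simp add: K_def)
  obtain j j' where j: "j \<in> {- int m..J + 1}" "j' \<in> {- int m..J + 1}" and pair: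
      "lqnorm m q (conv m \<mu> \<nu>) \<le> (real_of_int J + m + 2)\<^sup>2 *
         lqnorm m q (conv m (restr \<mu> (dyadic_piece m \<mu> K J j)) (restr \<nu> (dyadic_piece m \<nu> (2 powr - real m) J j')))"
    using exists_piece_pair[OF \<mu> \<nu> _ J K order_refl] q by (meson less_imp_le)
  have "0 < (real_of_int J + m + 2)\<^sup>2"
    using J by simp
  moreover have "(real_of_int J + m + 2)\<^sup>2 * (\<delta> * lqnorm m q \<mu>) \<le> (real_of_int J + m + 2)\<^sup>2 *
      lqnorm m q (conv m (restr \<mu> (dyadic_piece m \<mu> K J j)) (restr \<nu> (dyadic_piece m \<nu> (2 powr - real m) J j')))"
    using large pair by linarith
  ultimately have piece_large: "\<delta> * lqnorm m q \<mu> \<le>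
      lqnorm m q (conv m (restr \<mu> (dyadic_piece m \<mu> K J j)) (restr \<nu> (dyadic_piece m \<nu> (2 powr - real m) J j')))"
    by (rule mult_le_cancel_left_pos[THEN iffD1])
  have "j \<le> J" "j' \<le> J"
    using dyadic_piece_index_le[OF \<mu> \<nu> q J small _ _ piece_large[unfolded K_def]] j by simp_all
  with piece_large show ?thesis
    by (auto simp: dyadic_piece_def K_def)
qed

lemma lqnorm_conv_indicator_level_sets_ge:
  assumes \<mu>: "dyadic_measure m \<mu>" and \<nu>: "dyadic_measure m \<nu>" and q: "1 \<le> q" and "0 \<le> \<delta>"
    and K: "0 < K" "0 < K'" and A: "A = level_set m \<mu> K j" and B: "B = level_set m \<nu> K' j'"
    and large: "\<delta> * lqnorm m q \<mu> \<le> lqnorm m q (conv m (restr \<mu> A) (restr \<nu> B))"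
  shows "\<delta> / 4 * lqnorm m q (indicator A) * lqnorm m 1 (indicator B)
           \<le> lqnorm m q (conv m (indicator A) (indicator B))"
proof -
  define a b where "a = 2 powr (- real_of_int j) * K" and "b = 2 powr (- real_of_int j') * K'"
  have ab: "0 < a" "0 < b"
    using K by (simp_all add: a_def b_def)
  have upper: "lqnorm m q (conv m (restr \<mu> A) (restr \<nu> B)) \<le> a * b * lqnorm m q (conv m (indicator A) (indicator B))"
    using lqnorm_conv_restr_level_sets_le[of q \<mu> \<nu> K K' m j j'] q K \<mu> \<nu>
    by (simp add: A B a_def b_def dyadic_measure_nonneg)
  have "a / 2 * lqnorm m q (indicator A) \<le> lqnorm m q (restr \<mu> A)"
    using lqnorm_indicator_level_set_le[of q K j m \<mu>] q K by (simp add: A a_def)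
  also have "\<dots> \<le> lqnorm m q \<mu>"
    using q by (simp add: lqnorm_restr_le)
  finally have A_bound: "a / 2 * lqnorm m q (indicator A) \<le> lqnorm m q \<mu>" .
  have "B \<subseteq> grid m"
    by (auto simp: B level_set_def)
  then have "b / 2 * lqnorm m 1 (indicator B) = b / 2 * card B"
    by (simp add: lqnorm_1_indicator)
  also have "\<dots> \<le> (\<Sum>y\<in>B. \<nu> y)"
    using card_level_set_le[of j' K' m \<nu>] by (simp add: B b_def)
  also have "\<dots> \<le> 1"
    using \<nu> \<open>B \<subseteq> grid m\<close> by (rule dyadic_measure_sum_le_1)
  finally have B_bound: "b / 2 * lqnorm m 1 (indicator B) \<le> 1" .
  have "a * b * (\<delta> / 4 * lqnorm m q (indicator A) * lqnorm m 1 (indicator B))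
      = \<delta> * ((a / 2 * lqnorm m q (indicator A)) * (b / 2 * lqnorm m 1 (indicator B)))"
    by (simp add: field_simps)
  also have "\<dots> \<le> \<delta> * (lqnorm m q \<mu> * 1)"
    using A_bound B_bound ab \<open>0 \<le> \<delta>\<close>
    by (intro mult_left_mono mult_mono) (auto simp: lqnorm_nonneg)
  also have "\<dots> \<le> a * b * lqnorm m q (conv m (indicator A) (indicator B))"
    using large upper by simp
  finally show ?thesis
    using ab by simp
qed

lemma level_count_bound:
  fixes c \<epsilon> :: real
  assumes c: "0 \<le> c" and big: "4 * ((c + 1) * real m + 2)\<^sup>2 \<le> 2 powr (\<epsilon> * real m)"
  shows "(real_of_int \<lfloor>c * m\<rfloor> + m + 2)\<^sup>2 * (4 * 2 powr (- 2 * \<epsilon> * m)) \<le> 2 powr (- \<epsilon> * m)"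
proof -
  have "0 \<le> real_of_int \<lfloor>c * m\<rfloor> + m + 2" "real_of_int \<lfloor>c * m\<rfloor> + m + 2 \<le> (c + 1) * m + 2"
    using c by (simp_all add: algebra_simps)
  then have "(real_of_int \<lfloor>c * m\<rfloor> + m + 2)\<^sup>2 * (4 * 2 powr (- 2 * \<epsilon> * m))
      \<le> 4 * ((c + 1) * real m + 2)\<^sup>2 * 2 powr (- 2 * \<epsilon> * m)"
    by (simp add: power_mono)
  also have "\<dots> \<le> 2 powr (\<epsilon> * real m) * 2 powr (- 2 * \<epsilon> * m)"
    using big by simp
  also have "\<dots> = 2 powr (- \<epsilon> * m)"
    by (simp add: powr_add[symmetric])
  finally show ?thesis .
qed

lemma small_values_bound:
  fixes \<epsilon> q :: real
  assumes q: "1 < q"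
  shows "2 powr ((- real_of_int \<lfloor>2 * \<epsilon> * conj_exp q * m\<rfloor> - 1) * (q - 1) / q) < 4 * 2 powr (- 2 * \<epsilon> * m)"
proof -
  define J where "J = \<lfloor>2 * \<epsilon> * conj_exp q * m\<rfloor>"
  have "2 * \<epsilon> * m = 2 * \<epsilon> * conj_exp q * m * ((q - 1) / q)"
    using q by (simp add: conj_exp_def)
  also have "\<dots> < (real_of_int J + 1) * (q - 1) / q"
    using q mult_strict_right_mono[of "2 * \<epsilon> * conj_exp q * m" "real_of_int J + 1" "(q - 1) / q"]
    by (simp add: J_def)
  finally have "(- real_of_int J - 1) * (q - 1) / q < - 2 * \<epsilon> * m"
    by (metis minus_divide_left mult_minus_left minus_diff_eq minus_add_distrib
        diff_conv_add_uminus neg_less_iff_less)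
  then have "2 powr ((- real_of_int J - 1) * (q - 1) / q) < 2 powr (- 2 * \<epsilon> * m)"
    by (rule powr_less_mono) simp
  also have "\<dots> \<le> 4 * 2 powr (- 2 * \<epsilon> * m)"
    by simp
  finally show ?thesis
    by (simp add: J_def)
qed

lemma level_set_pair_for_large_m:
  fixes \<epsilon> q :: real
  assumes \<epsilon>: "0 < \<epsilon>" and q: "1 < q" and \<mu>: "dyadic_measure m \<mu>" and \<nu>: "dyadic_measure m \<nu>"
    and hyp: "2 powr (- \<epsilon> * m) * lqnorm m q \<mu> \<le> lqnorm m q (conv m \<mu> \<nu>)"
    and big: "4 * ((2 * \<epsilon> * conj_exp q + 1) * real m + 2)\<^sup>2 \<le> 2 powr (\<epsilon> * real m)"
  shows "\<exists>(j::int) (j'::int). j \<le> 2 * \<epsilon> * conj_exp q * m \<and> j' \<le> 2 * \<epsilon> * conj_exp q * m \<and>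
      (let A = level_set m \<mu> (lqnorm m q \<mu> powr conj_exp q) j;
           B = level_set m \<nu> (2 powr (- real m)) j'
       in lqnorm m q (conv m (indicator A) (indicator B))
            \<ge> 2 powr (- 2 * \<epsilon> * m) * lqnorm m q (indicator A) * lqnorm m 1 (indicator B)
          \<and> lqnorm m q (restr \<mu> A) \<ge> 2 powr (- 2 * \<epsilon> * m) * lqnorm m q \<mu>
          \<and> (\<Sum>y\<in>B. \<nu> y) \<ge> 2 powr (- 2 * \<epsilon> * m))"
proof -
  define c where "c = 2 * \<epsilon> * conj_exp q"
  define J where "J = \<lfloor>c * m\<rfloor>"
  define \<delta> :: real where "\<delta> = 4 * 2 powr (- 2 * \<epsilon> * m)"
  define K where "K = lqnorm m q \<mu> powr conj_exp q"
  have c: "0 \<le> c" and J: "0 \<le> J"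
    using \<epsilon> q by (simp_all add: c_def J_def conj_exp_def)
  have norm: "0 < lqnorm m q \<mu>"
    using dyadic_measure_lqnorm_pos[OF \<mu>] q by simp
  have "(real_of_int J + m + 2)\<^sup>2 * \<delta> * lqnorm m q \<mu> \<le> 2 powr (- \<epsilon> * m) * lqnorm m q \<mu>"
    using level_count_bound[OF c big[folded c_def]] norm
    by (intro mult_right_mono) (simp_all add: J_def \<delta>_def)
  then have large: "(real_of_int J + m + 2)\<^sup>2 * (\<delta> * lqnorm m q \<mu>) \<le> lqnorm m q (conv m \<mu> \<nu>)"
    using hyp by (simp add: mult.assoc)
  have small: "2 powr ((- real_of_int J - 1) * (q - 1) / q) < \<delta>"
    using small_values_bound[OF q, of \<epsilon> m] by (simp add: J_def c_def \<delta>_def)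
  obtain j j' where j: "j \<le> J" "j' \<le> J" and large: "\<delta> * lqnorm m q \<mu> \<le>
      lqnorm m q (conv m (restr \<mu> (level_set m \<mu> K j)) (restr \<nu> (level_set m \<nu> (2 powr - real m) j')))"
    using exists_large_level_pair[OF \<mu> \<nu> q J large small] unfolding K_def by blast
  define A B where "A = level_set m \<mu> K j" and "B = level_set m \<nu> (2 powr - real m) j'"
  have "\<delta> / 4 * lqnorm m q (indicator A) * lqnorm m 1 (indicator B)
      \<le> lqnorm m q (conv m (indicator A) (indicator B))"
    using q norm large unfolding A_def B_def \<delta>_def K_def
    by (intro lqnorm_conv_indicator_level_sets_ge[OF \<mu> \<nu>]) auto
  then have i: "2 powr (- 2 * \<epsilon> * m) * lqnorm m q (indicator A) * lqnorm m 1 (indicator B)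
      \<le> lqnorm m q (conv m (indicator A) (indicator B))"
    by (simp add: \<delta>_def)
  have factors: "\<delta> * lqnorm m q \<mu> \<le> lqnorm m q (restr \<mu> A)" "\<delta> \<le> (\<Sum>y\<in>B. \<nu> y)"
    using lqnorm_conv_restr_ge_imp_factors_ge[OF \<mu> \<nu> _ _ large] q
    by (simp_all add: A_def B_def level_set_def)
  have \<delta>: "2 powr (- 2 * \<epsilon> * m) \<le> \<delta>"
    by (simp add: \<delta>_def)
  have ii: "2 powr (- 2 * \<epsilon> * m) * lqnorm m q \<mu> \<le> lqnorm m q (restr \<mu> A)"
    using factors(1) mult_right_mono[OF \<delta>, of "lqnorm m q \<mu>"] norm by linarith
  have iii: "2 powr (- 2 * \<epsilon> * m) \<le> (\<Sum>y\<in>B. \<nu> y)"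
    using factors(2) \<delta> by linarith
  have "real_of_int J \<le> c * m"
    unfolding J_def by (rule of_int_floor_le)
  then have "real_of_int j \<le> 2 * \<epsilon> * conj_exp q * m" "real_of_int j' \<le> 2 * \<epsilon> * conj_exp q * m"
    using j unfolding c_def by linarith+
  with i ii iii show ?thesis
    unfolding Let_def A_def B_def K_def by blast
qed

theorem mainTheorem8:
  fixes \<epsilon> q :: real
  assumes "\<epsilon> > 0" and "q > 1"
  shows "\<exists>M::nat. \<forall>m\<ge>M. \<forall>\<mu> \<nu>.
    dyadic_measure m \<mu> \<and> dyadic_measure m \<nu> \<and>
    lqnorm m q (conv m \<mu> \<nu>) \<ge> 2 powr (- \<epsilon> * m) * lqnorm m q \<mu> \<longrightarrow>
    (\<exists>(j::int) (j'::int). j \<le> 2 * \<epsilon> * conj_exp q * m \<and> j' \<le> 2 * \<epsilon> * conj_exp q * m \<and>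
      (let A = {x\<in>grid m. 2 powr (- j - 1) * lqnorm m q \<mu> powr conj_exp q < \<mu> x \<and>
                          \<mu> x \<le> 2 powr (- j) * lqnorm m q \<mu> powr conj_exp q};
           B = {y\<in>grid m. 2 powr (- j' - 1) * 2 powr (- real m) < \<nu> y \<and>
                          \<nu> y \<le> 2 powr (- j') * 2 powr (- real m)}
       in lqnorm m q (conv m (indicator A) (indicator B))
            \<ge> 2 powr (- 2 * \<epsilon> * m) * lqnorm m q (indicator A) * lqnorm m 1 (indicator B)
          \<and> lqnorm m q (restr \<mu> A) \<ge> 2 powr (- 2 * \<epsilon> * m) * lqnorm m q \<mu>
          \<and> (\<Sum>y\<in>B. \<nu> y) \<ge> 2 powr (- 2 * \<epsilon> * m)))"
proof -
  define c where "c = 2 * \<epsilon> * conj_exp q"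
  have "0 \<le> c"
    using assms by (simp add: c_def conj_exp_def)
  then have "\<forall>\<^sub>F m in sequentially. 4 * ((c + 1) * real m + 2)\<^sup>2 \<le> 2 powr (\<epsilon> * real m)"
    using assms(1) by real_asymp
  then obtain M where "\<And>m. M \<le> m \<Longrightarrow> 4 * ((c + 1) * real m + 2)\<^sup>2 \<le> 2 powr (\<epsilon> * real m)"
    by (auto simp: eventually_sequentially)
  then show ?thesis
    using level_set_pair_for_large_m[OF assms] unfolding c_def level_set_def by blast
qed

end
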